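(* Let $X$ be a compact metric space and $(f_n)_{n\ge1}$ a sequence of continuous maps $X\to X$ converging uniformly to a function $\phi\colon X\to X$. If $p\in\mathbb{N}^*$ is an idempotent ($p+p=p$), then $\phi^p\circ f_1^{q+p}=f_1^{q+p+p}=f_1^{q+p}$ for all $q\in\mathbb{N}^*$; that is, $f_1^{q+p}(x)$ is a fixed point of $\phi^p$ for every $q\in\mathbb{N}^*$ and every $x\in X$.
   Context: $\mathbb{N}=\{1,2,\dots\}$, $\mathbb{N}^*$ the free ultrafilters on $\mathbb{N}$. For $r\in\mathbb{N}^*$, $r\text{-}\lim_n x_n$ is the unique $y$ with $\{n:x_n\in V\}\in r$ for all neighbourhoods $V$ of $y$. $f_1^n=f_n\circ\cdots\circ f_1$, $f_1^r(x)=r\text{-}\lim_n f_1^n(x)$; $\phi^n$ is the $n$-fold composition and $\phi^r(x)=r\text{-}\lim_n\phi^n(x)$ for $r\in\mathbb{N}^*$. Addition of ultrafilters: $p+q=\{A:\{n:\{m:m+n\in A\}\in p\}\in q\}$. *)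

theory Defs
  imports "HOL-Analysis.Analysis"
begin

text \<open>Free ultrafilters on the positive integers, represented as families of sets of
naturals. Since free ultrafilters contain no finite set, the element 0 is irrelevant.\<close>
definition free_ultrafilter_nat :: "nat set set \<Rightarrow> bool" where
  "free_ultrafilter_nat U \<longleftrightarrow>
     {} \<notin> U \<and>
     (\<forall>A B. A \<in> U \<and> A \<subseteq> B \<longrightarrow> B \<in> U) \<and>
     (\<forall>A B. A \<in> U \<and> B \<in> U \<longrightarrow> A \<inter> B \<in> U) \<and>
     (\<forall>A. A \<in> U \<or> - A \<in> U) \<and>
     (\<forall>A. finite A \<longrightarrow> A \<notin> U)"

definition uf_plus :: "nat set set \<Rightarrow> nat set set \<Rightarrow> nat set set" where
  "uf_plus p q = {A. {n. {m. m + n \<in> A} \<in> p} \<in> q}"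

definition rlim :: "nat set set \<Rightarrow> (nat \<Rightarrow> 'a::topological_space) \<Rightarrow> 'a" where
  "rlim r x = (THE y. \<forall>V. open V \<and> y \<in> V \<longrightarrow> {n. x n \<in> V} \<in> r)"

text \<open>f_1^n = f_n o ... o f_1 (with f_1^0 = id, never used at index 0 in a limit).\<close>
primrec comp_seq :: "(nat \<Rightarrow> 'a \<Rightarrow> 'a) \<Rightarrow> nat \<Rightarrow> 'a \<Rightarrow> 'a" where
  "comp_seq f 0 = id"
| "comp_seq f (Suc n) = f (Suc n) \<circ> comp_seq f n"

definition comp_seq_uf :: "(nat \<Rightarrow> 'a::topological_space \<Rightarrow> 'a) \<Rightarrow> nat set set \<Rightarrow> 'a \<Rightarrow> 'a" where
  "comp_seq_uf f r x = rlim r (\<lambda>n. comp_seq f n x)"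

definition iter_uf :: "('a::topological_space \<Rightarrow> 'a) \<Rightarrow> nat set set \<Rightarrow> 'a \<Rightarrow> 'a" where
  "iter_uf \<phi> r x = rlim r (\<lambda>n. (\<phi> ^^ n) x)"

end

theory Submission
  imports Defs
begin

text \<open>
  For every free ultrafilter r the (r+p)-limit of f_1^n(x) is the p-limit of \<phi>^n applied to
  y = f_1^r(x). Indeed, since the tails f_{m+n} \<circ> \<dots> \<circ> f_{m+1} converge uniformly to \<phi>^n as
  m \<rightarrow> \<infinity> and \<phi> is continuous, f_1^{m+n}(x) tends to \<phi>^n(y) along r for each fixed n, and a
  limit along r + p is the p-limit over n of the r-limits of the shifted sequences. So
  f_1^{r+p} = \<phi>^p \<circ> f_1^r; with r = q + p this is the first identity, and the second holds because
  ultrafilter addition is associative, whence (q + p) + p = q + (p + p) = q + p.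
\<close>

lemma free_ultrafilter_nat_mono: "free_ultrafilter_nat U \<Longrightarrow> A \<in> U \<Longrightarrow> A \<subseteq> B \<Longrightarrow> B \<in> U"
  unfolding free_ultrafilter_nat_def by (elim conjE allE impE) auto

lemma free_ultrafilter_nat_Int: "free_ultrafilter_nat U \<Longrightarrow> A \<in> U \<Longrightarrow> B \<in> U \<Longrightarrow> A \<inter> B \<in> U"
  unfolding free_ultrafilter_nat_def by simp

lemma free_ultrafilter_nat_finite: "free_ultrafilter_nat U \<Longrightarrow> finite A \<Longrightarrow> A \<notin> U"
  unfolding free_ultrafilter_nat_def by simp

lemma free_ultrafilter_nat_Compl_iff: "free_ultrafilter_nat U \<Longrightarrow> - A \<in> U \<longleftrightarrow> A \<notin> U"
  unfolding free_ultrafilter_nat_def by (metis Compl_disjoint)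

lemma uf_plus_assoc: "uf_plus (uf_plus q p) r = uf_plus q (uf_plus p r)"
  by (simp add: uf_plus_def add.assoc)

lemma free_ultrafilter_nat_uf_plus:
  assumes p: "free_ultrafilter_nat p" and q: "free_ultrafilter_nat q"
  shows "free_ultrafilter_nat (uf_plus p q)"
proof -
  define S where "S A = {n. {m. m + n \<in> A} \<in> p}" for A
  have S_mono: "S A \<subseteq> S B" if "A \<subseteq> B" for A B
  proof
    fix n assume "n \<in> S A"
    then have "{m. m + n \<in> A} \<in> p"
      by (simp add: S_def)
    then have "{m. m + n \<in> B} \<in> p"
      by (rule free_ultrafilter_nat_mono[OF p]) (use that in auto)
    then show "n \<in> S B"
      by (simp add: S_def)
  qed
  have S_Int: "S A \<inter> S B \<subseteq> S (A \<inter> B)" for A B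
  proof
    fix n assume "n \<in> S A \<inter> S B"
    then have "{m. m + n \<in> A} \<inter> {m. m + n \<in> B} \<in> p"
      by (simp add: S_def free_ultrafilter_nat_Int[OF p])
    then show "n \<in> S (A \<inter> B)"
      by (simp add: S_def Collect_conj_eq)
  qed
  have S_Compl: "S (- A) = - S A" for A
    by (simp add: S_def Collect_neg_eq free_ultrafilter_nat_Compl_iff[OF p])
  have S_finite: "S A = {}" if "finite A" for A
  proof -
    have "finite ((\<lambda>m. m + n) -` A)" for n
      using that by (rule finite_vimageI) (simp add: inj_on_def)
    then show ?thesis
      by (simp add: S_def vimage_def free_ultrafilter_nat_finite[OF p])
  qed
  have "uf_plus p q = {A. S A \<in> q}"
    by (simp add: uf_plus_def S_def)
  moreover have "S {} \<notin> q"
    by (simp add: S_finite free_ultrafilter_nat_finite[OF q])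
  moreover have "S B \<in> q" if "S A \<in> q" "A \<subseteq> B" for A B
    using free_ultrafilter_nat_mono[OF q that(1) S_mono[OF that(2)]] .
  moreover have "S (A \<inter> B) \<in> q" if "S A \<in> q" "S B \<in> q" for A B
    using free_ultrafilter_nat_mono[OF q free_ultrafilter_nat_Int[OF q that] S_Int] .
  moreover have "S A \<in> q \<or> S (- A) \<in> q" for A
    by (simp add: S_Compl free_ultrafilter_nat_Compl_iff[OF q])
  moreover have "S A \<notin> q" if "finite A" for A
    by (simp add: S_finite[OF that] free_ultrafilter_nat_finite[OF q])
  ultimately show ?thesis
    unfolding free_ultrafilter_nat_def by auto
qed

text \<open>r-limits are ordinary filter limits along the filter whose eventual sets form r.\<close>

definition uf_filter :: "nat set set \<Rightarrow> nat filter" where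
  "uf_filter U = Abs_filter (\<lambda>P. {n. P n} \<in> U)"

lemma eventually_uf_filter:
  assumes "free_ultrafilter_nat U"
  shows "eventually P (uf_filter U) \<longleftrightarrow> {n. P n} \<in> U"
  unfolding uf_filter_def
proof (rule eventually_Abs_filter, rule is_filter.intro)
  show "{n. True} \<in> U"
    using free_ultrafilter_nat_Compl_iff[OF assms, of "{}"] free_ultrafilter_nat_finite[OF assms]
    by simp
  show "{n. P n \<and> Q n} \<in> U" if "{n. P n} \<in> U" "{n. Q n} \<in> U" for P Q
    using free_ultrafilter_nat_Int[OF assms that] by (simp add: Collect_conj_eq)
  show "{n. Q n} \<in> U" if "\<forall>n. P n \<longrightarrow> Q n" "{n. P n} \<in> U" for P Q
    using free_ultrafilter_nat_mono[OF assms that(2)] that(1) by blast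
qed

lemma uf_filter_neq_bot: "free_ultrafilter_nat U \<Longrightarrow> uf_filter U \<noteq> bot"
  using eventually_uf_filter[of U "\<lambda>_. False"] free_ultrafilter_nat_finite[of U "{}"]
  by auto

lemma uf_filter_le_sequentially:
  assumes "free_ultrafilter_nat U"
  shows "uf_filter U \<le> sequentially"
proof (rule filter_leI)
  fix P assume "eventually P sequentially"
  then obtain N where "\<And>n. n \<ge> N \<Longrightarrow> P n"
    unfolding eventually_sequentially by blast
  then have "- {n. P n} \<subseteq> {..<N}"
    by (auto simp: not_le[symmetric])
  then have "- {n. P n} \<notin> U"
    using free_ultrafilter_nat_finite[OF assms] finite_subset by blast
  then show "eventually P (uf_filter U)"
    by (simp add: eventually_uf_filter[OF assms] free_ultrafilter_nat_Compl_iff[OF assms])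
qed

lemma tendsto_uf_filter_iff:
  "free_ultrafilter_nat U \<Longrightarrow>
     (x \<longlongrightarrow> y) (uf_filter U) \<longleftrightarrow> (\<forall>V. open V \<and> y \<in> V \<longrightarrow> {n. x n \<in> V} \<in> U)"
  unfolding tendsto_def by (auto simp: eventually_uf_filter)

lemma rlim_eqI:
  fixes x :: "nat \<Rightarrow> 'a::t2_space"
  assumes U: "free_ultrafilter_nat U" and lim: "(x \<longlongrightarrow> y) (uf_filter U)"
  shows "rlim U x = y"
  unfolding rlim_def
proof (rule the_equality)
  show "\<forall>V. open V \<and> y \<in> V \<longrightarrow> {n. x n \<in> V} \<in> U"
    using lim tendsto_uf_filter_iff[OF U] by blast
  show "z = y" if "\<forall>V. open V \<and> z \<in> V \<longrightarrow> {n. x n \<in> V} \<in> U" for z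
    using that tendsto_unique[OF uf_filter_neq_bot[OF U] _ lim] tendsto_uf_filter_iff[OF U]
    by blast
qed

lemma rlim_in_compact:
  fixes x :: "nat \<Rightarrow> 'a::t2_space"
  assumes U: "free_ultrafilter_nat U" and "compact X" and "\<And>n. x n \<in> X"
  shows "rlim U x \<in> X \<and> (x \<longlongrightarrow> rlim U x) (uf_filter U)"
proof -
  let ?G = "filtermap x (uf_filter U)"
  have "?G \<noteq> bot" "eventually (\<lambda>z. z \<in> X) ?G"
    using uf_filter_neq_bot[OF U] assms(3) by (simp_all add: filtermap_bot_iff eventually_filtermap)
  then obtain y where y: "y \<in> X" "inf (nhds y) ?G \<noteq> bot"
    using \<open>compact X\<close> unfolding compact_filter by blast
  have "{n. x n \<in> V} \<in> U" if "open V" "y \<in> V" for V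
  proof (rule ccontr)
    assume "{n. x n \<in> V} \<notin> U"
    then have "eventually (\<lambda>z. z \<notin> V) ?G"
      by (simp add: eventually_filtermap eventually_uf_filter[OF U] Collect_neg_eq
          free_ultrafilter_nat_Compl_iff[OF U])
    moreover have "eventually (\<lambda>z. z \<in> V) (nhds y)"
      using that eventually_nhds by blast
    ultimately have "eventually (\<lambda>_. False) (inf (nhds y) ?G)"
      unfolding eventually_inf by blast
    with y(2) show False
      by (simp add: eventually_False)
  qed
  then have "(x \<longlongrightarrow> y) (uf_filter U)"
    by (simp add: tendsto_uf_filter_iff[OF U])
  with y(1) show ?thesis
    using rlim_eqI[OF U \<open>(x \<longlongrightarrow> y) (uf_filter U)\<close>] by simp
qed

lemma tendsto_uf_plus:
  assumes p: "free_ultrafilter_nat p" and q: "free_ultrafilter_nat q"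
    and shifted: "\<And>n. ((\<lambda>m. x (m + n)) \<longlongrightarrow> a n) (uf_filter p)"
    and "(a \<longlongrightarrow> b) (uf_filter q)"
  shows "(x \<longlongrightarrow> b) (uf_filter (uf_plus p q))"
  unfolding tendsto_uf_filter_iff[OF free_ultrafilter_nat_uf_plus[OF p q]]
proof (intro allI impI)
  fix V assume V: "open V \<and> b \<in> V"
  have "{n. {m. x (m + n) \<in> V} \<in> p} \<in> q"
  proof (rule free_ultrafilter_nat_mono[OF q])
    show "{n. a n \<in> V} \<in> q"
      using V assms(4)[unfolded tendsto_uf_filter_iff[OF q]] by blast
    show "{n. a n \<in> V} \<subseteq> {n. {m. x (m + n) \<in> V} \<in> p}"
      using V shifted[unfolded tendsto_uf_filter_iff[OF p]] by blast
  qed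
  then show "{n. x n \<in> V} \<in> uf_plus p q"
    by (simp add: uf_plus_def)
qed

lemma tendsto_uniform_limit_compose:
  fixes h :: "'i \<Rightarrow> 'a::metric_space \<Rightarrow> 'b::metric_space"
  assumes "uniform_limit X h H G" and "filterlim k G F"
    and "(x \<longlongrightarrow> y) F" and "eventually (\<lambda>m. x m \<in> X) F" and "y \<in> X"
    and "continuous_on X H"
  shows "((\<lambda>m. h (k m) (x m)) \<longlongrightarrow> H y) F"
  unfolding tendsto_iff
proof (intro allI impI)
  fix e :: real assume "e > 0"
  have "uniform_limit X (\<lambda>m. h (k m)) H F"
    using filterlim_compose[OF assms(1,2)] by (simp add: comp_def)
  from uniform_limitD[OF this, of "e/2"]
  have "eventually (\<lambda>m. \<forall>z\<in>X. dist (h (k m) z) (H z) < e/2) F"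
    using \<open>e > 0\<close> by simp
  moreover have "eventually (\<lambda>m. dist (H (x m)) (H y) < e/2) F"
    using tendstoD[OF continuous_on_tendsto_compose[OF assms(6,3,5,4)], of "e/2"] \<open>e > 0\<close>
    by simp
  ultimately show "eventually (\<lambda>m. dist (h (k m) (x m)) (H y) < e) F"
    using assms(4)
  proof eventually_elim
    case (elim m)
    then have "dist (h (k m) (x m)) (H (x m)) < e/2"
      by blast
    with elim(2) show ?case
      using dist_triangle[of "h (k m) (x m)" "H y" "H (x m)"] by linarith
  qed
qed

lemma comp_seq_mem: "(\<And>n. n \<ge> 1 \<Longrightarrow> f n ` X \<subseteq> X) \<Longrightarrow> x \<in> X \<Longrightarrow> comp_seq f m x \<in> X"
  by (induction m) auto

lemma tendsto_comp_seq_shift: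
  fixes f :: "nat \<Rightarrow> 'a::metric_space \<Rightarrow> 'a"
  assumes fX: "\<And>n. n \<ge> 1 \<Longrightarrow> f n ` X \<subseteq> X" and "\<phi> ` X \<subseteq> X" and "continuous_on X \<phi>"
    and "uniform_limit X f \<phi> sequentially" and "F \<le> sequentially"
    and "x \<in> X" and "y \<in> X" and lim: "((\<lambda>m. comp_seq f m x) \<longlongrightarrow> y) F"
  shows "((\<lambda>m. comp_seq f (m + n) x) \<longlongrightarrow> (\<phi> ^^ n) y) F"
proof (induction n)
  case 0
  then show ?case using lim by simp
next
  case (Suc n)
  have "filterlim (\<lambda>m. Suc (m + n)) sequentially F"
    using filterlim_mono[OF filterlim_subseq _ \<open>F \<le> sequentially\<close>] by (simp add: strict_mono_def)
  moreover have "(\<phi> ^^ n) y \<in> X"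
    using \<open>\<phi> ` X \<subseteq> X\<close> \<open>y \<in> X\<close> by (induction n) auto
  ultimately have "((\<lambda>m. f (Suc (m + n)) (comp_seq f (m + n) x)) \<longlongrightarrow> \<phi> ((\<phi> ^^ n) y)) F"
    using tendsto_uniform_limit_compose[OF assms(4) _ Suc] comp_seq_mem[OF fX \<open>x \<in> X\<close>] assms(3)
    by simp
  then show ?case
    by simp
qed

lemma comp_seq_uf_uf_plus:
  fixes X :: "'a::metric_space set" and f :: "nat \<Rightarrow> 'a \<Rightarrow> 'a"
  assumes "compact X" and fX: "\<And>n. n \<ge> 1 \<Longrightarrow> f n ` X \<subseteq> X"
    and "\<phi> ` X \<subseteq> X" and "continuous_on X \<phi>" and "uniform_limit X f \<phi> sequentially"
    and r: "free_ultrafilter_nat r" and p: "free_ultrafilter_nat p" and "x \<in> X"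
  shows "comp_seq_uf f (uf_plus r p) x = iter_uf \<phi> p (comp_seq_uf f r x)"
proof -
  define y where "y = comp_seq_uf f r x"
  have y: "y \<in> X" "((\<lambda>m. comp_seq f m x) \<longlongrightarrow> y) (uf_filter r)"
    using rlim_in_compact[OF r \<open>compact X\<close> comp_seq_mem[OF fX \<open>x \<in> X\<close>]]
    unfolding y_def comp_seq_uf_def by simp_all
  have "(\<phi> ^^ n) y \<in> X" for n
    using \<open>\<phi> ` X \<subseteq> X\<close> \<open>y \<in> X\<close> by (induction n) auto
  then have "((\<lambda>n. (\<phi> ^^ n) y) \<longlongrightarrow> iter_uf \<phi> p y) (uf_filter p)"
    using rlim_in_compact[OF p \<open>compact X\<close>, of "\<lambda>n. (\<phi> ^^ n) y"] unfolding iter_uf_def by blast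
  moreover have "((\<lambda>m. comp_seq f (m + n) x) \<longlongrightarrow> (\<phi> ^^ n) y) (uf_filter r)" for n
    using tendsto_comp_seq_shift[OF fX assms(3-5) uf_filter_le_sequentially[OF r] \<open>x \<in> X\<close> y] .
  ultimately have "((\<lambda>k. comp_seq f k x) \<longlongrightarrow> iter_uf \<phi> p y) (uf_filter (uf_plus r p))"
    by (intro tendsto_uf_plus[OF r p])
  then show ?thesis
    unfolding y_def comp_seq_uf_def by (rule rlim_eqI[OF free_ultrafilter_nat_uf_plus[OF r p]])
qed

theorem corollary3p13:
  fixes X :: "'a::metric_space set" and f :: "nat \<Rightarrow> 'a \<Rightarrow> 'a" and \<phi> :: "'a \<Rightarrow> 'a"
    and p :: "nat set set"
  assumes "compact X"
    and "\<And>n. n \<ge> 1 \<Longrightarrow> continuous_on X (f n)"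
    and "\<And>n. n \<ge> 1 \<Longrightarrow> f n ` X \<subseteq> X"
    and "\<phi> ` X \<subseteq> X"
    and "uniform_limit X f \<phi> sequentially"
    and "free_ultrafilter_nat p"
    and "uf_plus p p = p"
  shows "\<forall>q. free_ultrafilter_nat q \<longrightarrow> (\<forall>x\<in>X.
           iter_uf \<phi> p (comp_seq_uf f (uf_plus q p) x) = comp_seq_uf f (uf_plus (uf_plus q p) p) x
         \<and> comp_seq_uf f (uf_plus (uf_plus q p) p) x = comp_seq_uf f (uf_plus q p) x)"
proof (intro allI impI ballI)
  fix q x assume q: "free_ultrafilter_nat q" and "x \<in> X"
  have "eventually (\<lambda>n. continuous_on X (f n)) sequentially"
    using assms(2) unfolding eventually_sequentially by blast
  then have "continuous_on X \<phi>"
    using uniform_limit_theorem[OF _ assms(5)] by simp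
  then have "comp_seq_uf f (uf_plus (uf_plus q p) p) x = iter_uf \<phi> p (comp_seq_uf f (uf_plus q p) x)"
    using comp_seq_uf_uf_plus[OF assms(1,3,4) _ assms(5) free_ultrafilter_nat_uf_plus[OF q assms(6)]
        assms(6) \<open>x \<in> X\<close>]
    by blast
  moreover have "uf_plus (uf_plus q p) p = uf_plus q p"
    by (simp add: uf_plus_assoc assms(7))
  ultimately show "iter_uf \<phi> p (comp_seq_uf f (uf_plus q p) x) = comp_seq_uf f (uf_plus (uf_plus q p) p) x
         \<and> comp_seq_uf f (uf_plus (uf_plus q p) p) x = comp_seq_uf f (uf_plus q p) x"
    by simp
qed

end
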